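(* Let $d>0$, $a\ge0$, $r>0$ and $0<x_1<L$. Then $$\lim_{\xi\to+\infty}\lambda_1\big(d,a,r-\xi\chi_{(x_1,L]},(0,L)\big)=\lambda_1^D\big(d,a,r,(0,x_1)\big).$$
   Context: $\chi_{(x_1,L]}(x)=1$ for $x_1<x\le L$ and $0$ for $0\le x\le x_1$. For $0\le y_1<y_2\le L$ and bounded $s$, $\lambda_1(d,a,s,(y_1,y_2))$ denotes the principal eigenvalue (the eigenvalue with a positive eigenfunction) of $d\varphi''-a\varphi'+s(x)\varphi=\lambda\varphi$ on $(y_1,y_2)$, $d\varphi'(y_1)-a\varphi(y_1)=\varphi'(y_2)=0$. $\lambda_1^D(d,a,r,(y_1,y_2))$ denotes the principal eigenvalue of $d\varphi''-a\varphi'+r\varphi=\lambda\varphi$ on $(y_1,y_2)$ with $d\varphi'(y_1)-a\varphi(y_1)=0$ and $\varphi(y_2)=0$. *)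

theory Defs
  imports "HOL-Analysis.Analysis"
begin

definition chi :: "real \<Rightarrow> real \<Rightarrow> real \<Rightarrow> real" where
  "chi x1 L x = (if x1 < x \<and> x \<le> L then 1 else 0)"

text \<open>Strong (W^{2,\<infinity>}) solution of  d phi'' - a phi' + s phi = lam phi  on [y1,y2]:
  phi is C^1 on [y1,y2] with derivative phi' (one-sided at the endpoints), and
  d (phi'(x) - phi'(y1)) = integral over [y1,x] of (a phi' + (lam - s) phi).\<close>
definition is_eigsol ::
  "real \<Rightarrow> real \<Rightarrow> (real \<Rightarrow> real) \<Rightarrow> real \<Rightarrow> real \<Rightarrow> real \<Rightarrow> (real \<Rightarrow> real) \<Rightarrow> (real \<Rightarrow> real) \<Rightarrow> bool" where
  "is_eigsol d a s y1 y2 lam phi phi' \<longleftrightarrow>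
     (\<forall>x\<in>{y1..y2}. (phi has_real_derivative phi' x) (at x within {y1..y2})) \<and>
     continuous_on {y1..y2} phi' \<and>
     (\<forall>x\<in>{y1..y2}. ((\<lambda>t. a * phi' t + (lam - s t) * phi t) has_integral
                         d * (phi' x - phi' y1)) {y1..x})"

definition lambda1 :: "real \<Rightarrow> real \<Rightarrow> (real \<Rightarrow> real) \<Rightarrow> real \<Rightarrow> real \<Rightarrow> real" where
  "lambda1 d a s y1 y2 = (THE lam. \<exists>phi phi'. is_eigsol d a s y1 y2 lam phi phi' \<and>
       (\<forall>x\<in>{y1<..<y2}. phi x > 0) \<and>
       d * phi' y1 - a * phi y1 = 0 \<and> phi' y2 = 0)"

definition lambda1D :: "real \<Rightarrow> real \<Rightarrow> real \<Rightarrow> real \<Rightarrow> real \<Rightarrow> real" where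
  "lambda1D d a r y1 y2 = (THE lam. \<exists>phi phi'. is_eigsol d a (\<lambda>_. r) y1 y2 lam phi phi' \<and>
       (\<forall>x\<in>{y1<..<y2}. phi x > 0) \<and>
       d * phi' y1 - a * phi y1 = 0 \<and> phi y2 = 0)"

end

theory Submission
  imports Defs "HOL-Real_Asymp.Real_Asymp"
begin

text \<open>Write k = a / (2 d). On [0, x1] the potential is r, and the solutions satisfying the Robin
  condition at 0 are multiples of e^(kx) (w cos (wx) + k sin (wx)), with eigenvalue r - d k^2 - d w^2.
  On [x1, L] the potential is r - \<xi>, and the solutions with the same eigenvalue satisfying the
  Neumann condition at L are multiples of e^(kx) ((n + k) e^(n (L - x)) + (n - k) e^(-n (L - x))),
  where \<xi> = d (n^2 + w^2). A positive eigenfunction determines its eigenvalue (Sturm comparison).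
  Hence the Dirichlet eigenvalue is r - d k^2 - d wD^2, where wD x1 = \<pi>/2 + arctan (k / wD) is the
  frequency at which the trigonometric solution first vanishes at x1, and \<lambda>1(\<xi>) = r - d k^2 - d w^2
  for any w < wD at which the two pieces glue to a C^1 function at x1. The Wronskian of the pieces at
  x1 is negative for w = wD, and for any fixed w0 < wD it is positive at w0 once \<xi> is large, since
  n ~ sqrt (\<xi> / d) makes the hyperbolic piece steep. The intermediate value theorem gives a gluing
  frequency in (w0, wD), so \<lambda>1(\<xi>) is squeezed between r - d k^2 - d wD^2 and r - d k^2 - d w0^2.\<close>

lemma is_eigsolI:
  fixes phi phi' :: "real \<Rightarrow> real"
  assumes "y1 \<le> y2" and d: "d \<noteq> 0"
    and deriv: "\<And>x. x \<in> {y1..y2} \<Longrightarrow> (phi has_real_derivative phi' x) (at x within {y1..y2})"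
    and cont: "continuous_on {y1..y2} phi'"
    and ode: "\<And>x. y1 < x \<Longrightarrow> x < y2 \<Longrightarrow> x \<noteq> p \<Longrightarrow>
        (phi' has_real_derivative (a * phi' x + (lam - s x) * phi x) / d) (at x)"
  shows "is_eigsol d a s y1 y2 lam phi phi'"
  unfolding is_eigsol_def
proof (intro conjI ballI deriv cont)
  fix x assume x: "x \<in> {y1..y2}"
  have "((\<lambda>t. a * phi' t + (lam - s t) * phi t) has_integral (d * phi' x - d * phi' y1)) {y1..x}"
  proof (rule fundamental_theorem_of_calculus_interior_strong[where S="{p}"])
    show "continuous_on {y1..x} (\<lambda>t. d * phi' t)"
      using x by (intro continuous_intros continuous_on_subset[OF cont]) auto
    fix t assume t: "t \<in> {y1<..<x} - {p}"
    have "((\<lambda>t. d * phi' t) has_real_derivative d * ((a * phi' t + (lam - s t) * phi t) / d)) (at t)"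
      using t x by (intro DERIV_cmult ode) auto
    then show "((\<lambda>t. d * phi' t) has_vector_derivative a * phi' t + (lam - s t) * phi t) (at t)"
      using d by (simp add: has_real_derivative_iff_has_vector_derivative)
  qed (use x in auto)
  then show "((\<lambda>t. a * phi' t + (lam - s t) * phi t) has_integral d * (phi' x - phi' y1)) {y1..x}"
    by (simp add: algebra_simps)
qed

lemma is_eigsol_second_derivative:
  assumes E: "is_eigsol d a s y1 y2 lam f f'" and d: "d \<noteq> 0"
    and t: "y1 < t" "t < y2" and s: "isCont s t"
  shows "(f' has_real_derivative (a * f' t + (lam - s t) * f t) / d) (at t)"
proof -
  define F where "F = (\<lambda>u. a * f' u + (lam - s u) * f u)"
  have f: "\<forall>x\<in>{y1..y2}. (f has_real_derivative f' x) (at x within {y1..y2})"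
   and f': "continuous_on {y1..y2} f'"
   and F: "\<forall>x\<in>{y1..y2}. (F has_integral d * (f' x - f' y1)) {y1..x}"
    using E unfolding is_eigsol_def F_def by auto
  have t_in: "t \<in> {y1..y2}" and at_t: "at t within {y1..y2} = at t"
    using t by (auto simp: at_within_Icc_at)
  have "continuous (at t) F"
    unfolding F_def using f'[unfolded continuous_on_eq_continuous_within, rule_format, OF t_in]
      DERIV_continuous[OF f[rule_format, OF t_in]] s at_t
    by (auto intro!: continuous_intros)
  then have "((\<lambda>u. integral {y1..u} F) has_vector_derivative F t) (at t within {y1..y2})"
    using integral_has_vector_derivative_continuous_at[of F y1 y2 t "{}"] F[rule_format, of y2] t_in
    by (auto intro: continuous_at_imp_continuous_at_within)
  then have "((\<lambda>u. f' y1 + integral {y1..u} F / d) has_real_derivative F t / d) (at t)"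
    using d by (auto intro!: derivative_eq_intros
        simp: at_t has_real_derivative_iff_has_vector_derivative[symmetric])
  then have "(f' has_real_derivative F t / d) (at t)"
  proof (rule has_field_derivative_transform_within_open[where S="{y1<..<y2}"])
    fix x assume "x \<in> {y1<..<y2}"
    then show "f' y1 + integral {y1..x} F / d = f' x"
      using integral_unique[OF F[rule_format, of x]] d by (simp add: field_simps)
  qed (use t in auto)
  then show ?thesis unfolding F_def .
qed

lemma DERIV_pos_imp_increasing_except:
  fixes G :: "real \<Rightarrow> real"
  assumes "y1 < y2" "continuous_on {y1..y2} G"
    and "\<And>t. y1 < t \<Longrightarrow> t < y2 \<Longrightarrow> t \<noteq> p \<Longrightarrow> \<exists>D. DERIV G t :> D \<and> D > 0"
  shows "G y1 < G y2"
proof (cases "y1 < p \<and> p < y2")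
  case True
  have "G y1 < G p"
    by (rule DERIV_pos_imp_increasing_open) (use True assms in \<open>auto intro: continuous_on_subset\<close>)
  also have "G p < G y2"
    by (rule DERIV_pos_imp_increasing_open) (use True assms in \<open>auto intro: continuous_on_subset\<close>)
  finally show ?thesis .
next
  case False
  show ?thesis
    by (rule DERIV_pos_imp_increasing_open) (use False assms in auto)
qed

text \<open>Sturm comparison: the weighted Wronskian exp (-a x / d) (f' g - g' f) has derivative
  exp (-a x / d) (l1 - l2) f g / d, so it cannot vanish at both ends if l1 > l2.\<close>
lemma positive_eigensol_eigenvalue_le:
  assumes y: "y1 < y2" and d: "d > 0"
    and Ef: "is_eigsol d a s y1 y2 l1 f f'" and Eg: "is_eigsol d a s y1 y2 l2 g g'"
    and f_pos: "\<forall>x\<in>{y1<..<y2}. f x > 0" and g_pos: "\<forall>x\<in>{y1<..<y2}. g x > 0"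
    and s: "\<And>t. y1 < t \<Longrightarrow> t < y2 \<Longrightarrow> t \<noteq> p \<Longrightarrow> isCont s t"
    and W1: "f' y1 * g y1 = g' y1 * f y1" and W2: "f' y2 * g y2 = g' y2 * f y2"
  shows "l1 \<le> l2"
proof (rule ccontr)
  assume "\<not> l1 \<le> l2"
  then have l: "l1 > l2" by simp
  define W where "W = (\<lambda>x. exp (- (a / d) * x) * (f' x * g x - g' x * f x))"
  have df: "\<forall>x\<in>{y1..y2}. (f has_real_derivative f' x) (at x within {y1..y2})"
   and cf': "continuous_on {y1..y2} f'"
   and dg: "\<forall>x\<in>{y1..y2}. (g has_real_derivative g' x) (at x within {y1..y2})"
   and cg': "continuous_on {y1..y2} g'"
    using Ef Eg unfolding is_eigsol_def by auto
  have "continuous_on {y1..y2} f" "continuous_on {y1..y2} g"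
    using df dg by (meson DERIV_continuous continuous_on_eq_continuous_within)+
  then have "continuous_on {y1..y2} W"
    unfolding W_def by (intro continuous_intros cf' cg')
  then have "W y1 < W y2"
  proof (rule DERIV_pos_imp_increasing_except[OF y])
    fix t assume t: "y1 < t" "t < y2" "t \<noteq> p"
    have at_t: "at t within {y1..y2} = at t" using t by (simp add: at_within_Icc_at)
    have derivs: "(f has_real_derivative f' t) (at t)" "(g has_real_derivative g' t) (at t)"
      "(f' has_real_derivative (a * f' t + (l1 - s t) * f t) / d) (at t)"
      "(g' has_real_derivative (a * g' t + (l2 - s t) * g t) / d) (at t)"
      using df[rule_format, of t] dg[rule_format, of t] t at_t
        is_eigsol_second_derivative[OF _ _ t(1,2) s[OF t]] Ef Eg d by auto
    have "(W has_real_derivative exp (- (a / d) * t) * ((l1 - l2) * f t * g t / d)) (at t)"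
      unfolding W_def
      by (rule derivative_eq_intros derivs | simp)+ (use d in \<open>simp add: field_simps\<close>)
    moreover have "exp (- (a / d) * t) * ((l1 - l2) * f t * g t / d) > 0"
      using l d f_pos g_pos t by simp
    ultimately show "\<exists>D. (W has_real_derivative D) (at t) \<and> D > 0" by blast
  qed
  moreover have "W y1 = 0" "W y2 = 0" unfolding W_def using W1 W2 by auto
  ultimately show False by simp
qed

lemma positive_robin_eigensol_eigenvalue_unique:
  assumes y: "y1 < y2" and d: "d > 0"
    and Ef: "is_eigsol d a s y1 y2 l1 f f'" and Eg: "is_eigsol d a s y1 y2 l2 g g'"
    and f_pos: "\<forall>x\<in>{y1<..<y2}. f x > 0" and g_pos: "\<forall>x\<in>{y1<..<y2}. g x > 0"
    and s: "\<And>t. y1 < t \<Longrightarrow> t < y2 \<Longrightarrow> t \<noteq> p \<Longrightarrow> isCont s t"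
    and f_robin: "d * f' y1 - a * f y1 = 0" and g_robin: "d * g' y1 - a * g y1 = 0"
    and W2: "f' y2 * g y2 = g' y2 * f y2"
  shows "l1 = l2"
proof -
  have "d * (f' y1 * g y1 - g' y1 * f y1) = (d * f' y1) * g y1 - (d * g' y1) * f y1"
    by (simp add: algebra_simps)
  also have "\<dots> = 0" using f_robin g_robin by (simp add: algebra_simps)
  finally have W1: "f' y1 * g y1 = g' y1 * f y1" using d by simp
  show ?thesis
    using positive_eigensol_eigenvalue_le[where p=p, OF y d Ef Eg f_pos g_pos s W1 W2]
      positive_eigensol_eigenvalue_le[where p=p, OF y d Eg Ef g_pos f_pos s W1[symmetric] W2[symmetric]]
    by simp
qed

lemma lambda1_eqI:
  assumes y: "y1 < y2" and d: "d > 0"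
    and s: "\<And>t. y1 < t \<Longrightarrow> t < y2 \<Longrightarrow> t \<noteq> p \<Longrightarrow> isCont s t"
    and E: "is_eigsol d a s y1 y2 lam phi phi'" and pos: "\<forall>x\<in>{y1<..<y2}. phi x > 0"
    and robin: "d * phi' y1 - a * phi y1 = 0" and neumann: "phi' y2 = 0"
  shows "lambda1 d a s y1 y2 = lam"
  unfolding lambda1_def
proof (rule the_equality)
  show "\<exists>phi phi'. is_eigsol d a s y1 y2 lam phi phi' \<and> (\<forall>x\<in>{y1<..<y2}. phi x > 0) \<and>
      d * phi' y1 - a * phi y1 = 0 \<and> phi' y2 = 0"
    using E pos robin neumann by blast
  fix l assume "\<exists>g g'. is_eigsol d a s y1 y2 l g g' \<and> (\<forall>x\<in>{y1<..<y2}. g x > 0) \<and>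
      d * g' y1 - a * g y1 = 0 \<and> g' y2 = 0"
  then obtain g g' where Eg: "is_eigsol d a s y1 y2 l g g'" and g_pos: "\<forall>x\<in>{y1<..<y2}. g x > 0"
    and g_robin: "d * g' y1 - a * g y1 = 0" and g_neumann: "g' y2 = 0" by blast
  have W2: "g' y2 * phi y2 = phi' y2 * g y2" by (simp add: g_neumann neumann)
  show "l = lam"
    by (rule positive_robin_eigensol_eigenvalue_unique[where p=p, OF y d Eg E g_pos pos s g_robin robin W2])
qed

lemma lambda1D_eqI:
  assumes y: "y1 < y2" and d: "d > 0"
    and E: "is_eigsol d a (\<lambda>_. r) y1 y2 lam phi phi'" and pos: "\<forall>x\<in>{y1<..<y2}. phi x > 0"
    and robin: "d * phi' y1 - a * phi y1 = 0" and dirichlet: "phi y2 = 0"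
  shows "lambda1D d a r y1 y2 = lam"
  unfolding lambda1D_def
proof (rule the_equality)
  show "\<exists>phi phi'. is_eigsol d a (\<lambda>_. r) y1 y2 lam phi phi' \<and> (\<forall>x\<in>{y1<..<y2}. phi x > 0) \<and>
      d * phi' y1 - a * phi y1 = 0 \<and> phi y2 = 0"
    using E pos robin dirichlet by blast
  fix l assume "\<exists>g g'. is_eigsol d a (\<lambda>_. r) y1 y2 l g g' \<and> (\<forall>x\<in>{y1<..<y2}. g x > 0) \<and>
      d * g' y1 - a * g y1 = 0 \<and> g y2 = 0"
  then obtain g g' where Eg: "is_eigsol d a (\<lambda>_. r) y1 y2 l g g'"
    and g_pos: "\<forall>x\<in>{y1<..<y2}. g x > 0"
    and g_robin: "d * g' y1 - a * g y1 = 0" and g_dirichlet: "g y2 = 0" by blast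
  have W2: "g' y2 * phi y2 = phi' y2 * g y2" by (simp add: g_dirichlet dirichlet)
  show "l = lam"
    by (rule positive_robin_eigensol_eigenvalue_unique[OF y d Eg E g_pos pos _ g_robin robin W2]) simp
qed

lemma isCont_chi:
  assumes "t \<noteq> x1" "t \<noteq> L"
  shows "isCont (chi x1 L) t"
proof -
  have "\<forall>\<^sub>F x in nhds t. chi x1 L x = chi x1 L t"
  proof (cases "x1 < t \<and> t < L")
    case True
    then have "\<forall>\<^sub>F x in nhds t. x \<in> {x1<..<L}" by (intro eventually_nhds_in_open) auto
    then show ?thesis by eventually_elim (use True in \<open>auto simp: chi_def\<close>)
  next
    case False
    then have "\<forall>\<^sub>F x in nhds t. x \<in> - {x1..L}" using assms by (intro eventually_nhds_in_open) auto
    then show ?thesis by eventually_elim (use False assms in \<open>auto simp: chi_def\<close>)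
  qed
  then show ?thesis using isCont_cong by force
qed

lemma glued_has_real_derivative:
  fixes f g f' g' :: "real \<Rightarrow> real"
  assumes f: "\<And>x. (f has_real_derivative f' x) (at x)" and g: "\<And>x. (g has_real_derivative g' x) (at x)"
    and "f c = g c" "f' c = g' c"
  shows "((\<lambda>t. if t \<le> c then f t else g t) has_real_derivative (if x \<le> c then f' x else g' x)) (at x)"
proof (cases x c rule: linorder_cases)
  case less
  have "((\<lambda>t. if t \<le> c then f t else g t) has_real_derivative f' x) (at x)"
    by (rule has_field_derivative_transform_within_open[OF f, where S="{..<c}"]) (use less in auto)
  then show ?thesis using less by simp
next
  case equal
  have "(f has_real_derivative g' c) (at c)" using f[of c] assms(4) by simp
  then have "((\<lambda>t. if t \<in> {..c} then f t else g t) has_vector_derivative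
      (if c \<in> {..c} then f' c else g' c)) (at c within UNIV)"
    by (intro has_vector_derivative_If_within_closures[where T="{c<..}"])
      (use g assms(3,4) in \<open>auto simp: has_real_derivative_iff_has_vector_derivative[symmetric]
        intro: has_field_derivative_at_within\<close>)
  then show ?thesis using equal by (simp add: has_real_derivative_iff_has_vector_derivative)
next
  case greater
  have "((\<lambda>t. if t \<le> c then f t else g t) has_real_derivative g' x) (at x)"
    by (rule has_field_derivative_transform_within_open[OF g, where S="{c<..}"]) (use greater in auto)
  then show ?thesis using greater by simp
qed

definition trig_mode :: "real \<Rightarrow> real \<Rightarrow> real \<Rightarrow> real" where
  "trig_mode k w x = exp (k * x) * (w * cos (w * x) + k * sin (w * x))"

definition trig_mode' :: "real \<Rightarrow> real \<Rightarrow> real \<Rightarrow> real" where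
  "trig_mode' k w x = exp (k * x) * (2 * k * w * cos (w * x) + (k\<^sup>2 - w\<^sup>2) * sin (w * x))"

definition hyp_mode :: "real \<Rightarrow> real \<Rightarrow> real \<Rightarrow> real \<Rightarrow> real" where
  "hyp_mode k n L x = exp (k * x) * ((n + k) * exp (n * (L - x)) + (n - k) * exp (- (n * (L - x))))"

definition hyp_mode' :: "real \<Rightarrow> real \<Rightarrow> real \<Rightarrow> real \<Rightarrow> real" where
  "hyp_mode' k n L x = exp (k * x) * ((n\<^sup>2 - k\<^sup>2) * (exp (- (n * (L - x))) - exp (n * (L - x))))"

lemma has_real_derivative_trig_mode: "(trig_mode k w has_real_derivative trig_mode' k w x) (at x)"
  unfolding trig_mode_def trig_mode'_def
  by (rule derivative_eq_intros refl | simp)+ (simp add: algebra_simps power2_eq_square)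

lemma has_real_derivative_trig_mode':
  "(trig_mode' k w has_real_derivative 2 * k * trig_mode' k w x - (k\<^sup>2 + w\<^sup>2) * trig_mode k w x) (at x)"
  unfolding trig_mode_def trig_mode'_def
  by (rule derivative_eq_intros refl | simp)+ (simp add: algebra_simps power2_eq_square)

lemma has_real_derivative_hyp_mode: "(hyp_mode k n L has_real_derivative hyp_mode' k n L x) (at x)"
  unfolding hyp_mode_def hyp_mode'_def
  by (rule derivative_eq_intros refl | simp)+ (simp add: algebra_simps power2_eq_square)

lemma has_real_derivative_hyp_mode':
  "(hyp_mode' k n L has_real_derivative 2 * k * hyp_mode' k n L x + (n\<^sup>2 - k\<^sup>2) * hyp_mode k n L x) (at x)"
  unfolding hyp_mode_def hyp_mode'_def
  by (rule derivative_eq_intros refl | simp)+ (simp add: algebra_simps power2_eq_square)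

lemma hyp_mode'_right_end [simp]: "hyp_mode' k n L L = 0"
  by (simp add: hyp_mode'_def)

lemma hyp_mode_pos:
  assumes "\<bar>k\<bar> < n"
  shows "hyp_mode k n L x > 0"
proof -
  have "(n + k) * exp (n * (L - x)) > 0" "(n - k) * exp (- (n * (L - x))) > 0"
    using assms by simp_all
  then show ?thesis unfolding hyp_mode_def by simp
qed

lemma cos_arctan_pos [simp]: "cos (arctan x) > 0"
  by (intro cos_gt_zero_pi arctan_lbound arctan_ubound)

lemma cos_sin_combination_polar:
  fixes k w \<theta> :: real
  assumes w: "w > 0"
  defines "\<alpha> \<equiv> arctan (k / w)"
  shows "w * cos \<theta> + k * sin \<theta> = (w / cos \<alpha>) * cos (\<theta> - \<alpha>)"
    and "k * cos \<theta> - w * sin \<theta> = - (w / cos \<alpha>) * sin (\<theta> - \<alpha>)"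
proof -
  have cos: "cos \<alpha> > 0" unfolding \<alpha>_def by simp
  have "tan \<alpha> = k / w" unfolding \<alpha>_def by (simp add: tan_arctan)
  then have k: "k = w * sin \<alpha> / cos \<alpha>" using w cos by (simp add: tan_def field_simps)
  show "w * cos \<theta> + k * sin \<theta> = (w / cos \<alpha>) * cos (\<theta> - \<alpha>)"
    unfolding cos_diff using cos by (subst k) (simp add: field_simps)
  show "k * cos \<theta> - w * sin \<theta> = - (w / cos \<alpha>) * sin (\<theta> - \<alpha>)"
    unfolding sin_diff using cos by (subst k) (simp add: field_simps)
qed

lemma trig_mode_pos:
  assumes w: "w > 0" and x: "x \<ge> 0" and below: "w * x < pi / 2 + arctan (k / w)"
  shows "trig_mode k w x > 0"
proof -
  have "w * x \<ge> 0" using w x by simp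
  then have "cos (w * x - arctan (k / w)) > 0"
    using arctan_ubound[of "k / w"] below by (intro cos_gt_zero_pi) linarith+
  then show ?thesis
    unfolding trig_mode_def cos_sin_combination_polar(1)[OF w] using w by simp
qed

lemma trig_mode_first_zero:
  assumes w: "w > 0" and zero: "w * x = pi / 2 + arctan (k / w)"
  shows "trig_mode k w x = 0" and "trig_mode' k w x < 0"
proof -
  have "trig_mode' k w x = exp (k * x) *
      (k * (w * cos (w * x) + k * sin (w * x)) + w * (k * cos (w * x) - w * sin (w * x)))"
    unfolding trig_mode'_def by (simp add: algebra_simps power2_eq_square)
  also have "\<dots> = exp (k * x) * (- w * w / cos (arctan (k / w)))"
    unfolding cos_sin_combination_polar[OF w] zero by simp
  finally show "trig_mode' k w x < 0"
    using w by (simp add: mult_pos_neg divide_neg_pos)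
  show "trig_mode k w x = 0"
    unfolding trig_mode_def cos_sin_combination_polar(1)[OF w] zero by simp
qed

lemma first_zero_frequency_exists:
  fixes x1 k :: real
  assumes x1: "x1 > 0" and k: "k \<ge> 0"
  obtains w where "w > 0" "w * x1 = pi / 2 + arctan (k / w)"
proof -
  define f where "f = (\<lambda>w. w * x1 - arctan (k / w))"
  have pos: "pi / (2 * x1) > 0" using x1 by simp
  have "\<exists>w. pi / (2 * x1) \<le> w \<and> w \<le> pi / x1 \<and> f w = pi / 2"
  proof (rule IVT')
    show "f (pi / (2 * x1)) \<le> pi / 2" unfolding f_def using x1 k by simp
    show "pi / 2 \<le> f (pi / x1)" unfolding f_def using x1 arctan_ubound[of "k / (pi / x1)"] by simp
    show "pi / (2 * x1) \<le> pi / x1" using x1 by (simp add: divide_left_mono)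
    show "continuous_on {pi / (2 * x1)..pi / x1} f"
      unfolding f_def using pos by (intro continuous_intros) auto
  qed
  then obtain w where "pi / (2 * x1) \<le> w" "w * x1 - arctan (k / w) = pi / 2"
    unfolding f_def by blast
  then show ?thesis using pos by (intro that[of w]) linarith+
qed

lemma below_first_zero_frequency:
  fixes x1 k w wD :: real
  assumes "0 < w" "w < wD" "wD * x1 = pi / 2 + arctan (k / wD)" "k \<ge> 0" "x1 > 0"
  shows "w * x1 < pi / 2 + arctan (k / w)"
proof -
  have "k / wD \<le> k / w" using assms by (intro divide_left_mono) auto
  then have "arctan (k / wD) \<le> arctan (k / w)" by (simp add: arctan_le_iff)
  moreover have "w * x1 < wD * x1" using assms(1,2,5) by simp
  ultimately show ?thesis using assms(3) by linarith
qed

lemma is_eigsol_trig_mode: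
  assumes "d \<noteq> 0" "y1 \<le> y2"
  shows "is_eigsol d (2 * d * k) (\<lambda>_. r) y1 y2 (r - d * k\<^sup>2 - d * w\<^sup>2) (trig_mode k w) (trig_mode' k w)"
proof (rule is_eigsolI[OF assms(2,1)])
  show "(trig_mode k w has_real_derivative trig_mode' k w x) (at x within {y1..y2})" for x
    by (rule has_field_derivative_at_within[OF has_real_derivative_trig_mode])
  show "continuous_on {y1..y2} (trig_mode' k w)"
    using has_real_derivative_trig_mode' by (meson DERIV_isCont continuous_at_imp_continuous_on)
  show "(trig_mode' k w has_real_derivative
      (2 * d * k * trig_mode' k w x + (r - d * k\<^sup>2 - d * w\<^sup>2 - r) * trig_mode k w x) / d) (at x)" for x
    by (rule DERIV_cong[OF has_real_derivative_trig_mode']) (use assms in \<open>simp add: field_simps\<close>)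
qed

lemma lambda1D_eq_first_zero:
  assumes d: "d > 0" and x1: "x1 > 0" and w: "w > 0" "w * x1 = pi / 2 + arctan (k / w)"
  shows "lambda1D d (2 * d * k) r 0 x1 = r - d * k\<^sup>2 - d * w\<^sup>2"
proof (rule lambda1D_eqI[OF x1 d is_eigsol_trig_mode])
  show "\<forall>x\<in>{0<..<x1}. trig_mode k w x > 0"
  proof
    fix x assume x: "x \<in> {0<..<x1}"
    then have "w * x < w * x1" using w(1) by simp
    with w(2) have "w * x < pi / 2 + arctan (k / w)" by linarith
    then show "trig_mode k w x > 0" using trig_mode_pos[OF w(1)] x by simp
  qed
  show "d * trig_mode' k w 0 - 2 * d * k * trig_mode k w 0 = 0"
    by (simp add: trig_mode_def trig_mode'_def)
  show "trig_mode k w x1 = 0" by (rule trig_mode_first_zero(1)[OF w])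
qed (use d x1 in auto)

lemma is_eigsol_glued:
  fixes f f' g g' :: "real \<Rightarrow> real"
  assumes "y1 \<le> y2" "d \<noteq> 0"
    and f: "\<And>x. (f has_real_derivative f' x) (at x)"
    and f': "\<And>x. (f' has_real_derivative (a * f' x + (lam - sl) * f x) / d) (at x)"
    and g: "\<And>x. (g has_real_derivative g' x) (at x)"
    and g': "\<And>x. (g' has_real_derivative (a * g' x + (lam - sr) * g x) / d) (at x)"
    and match: "f c = g c" "f' c = g' c"
    and on_left: "\<And>x. y1 < x \<Longrightarrow> x < c \<Longrightarrow> s x = sl"
    and on_right: "\<And>x. c < x \<Longrightarrow> x < y2 \<Longrightarrow> s x = sr"
  shows "is_eigsol d a s y1 y2 lam
    (\<lambda>x. if x \<le> c then f x else g x) (\<lambda>x. if x \<le> c then f' x else g' x)"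
proof (rule is_eigsolI[where p=c, OF assms(1,2)])
  show "((\<lambda>x. if x \<le> c then f x else g x) has_real_derivative (if x \<le> c then f' x else g' x))
      (at x within {y1..y2})" for x
    by (rule has_field_derivative_at_within[OF glued_has_real_derivative[OF f g match]])
  have "continuous_on S f'" "continuous_on S g'" for S
    using f' g' by (meson DERIV_isCont continuous_at_imp_continuous_on)+
  then have "continuous_on UNIV (\<lambda>x. if x \<le> c then f' x else g' x)"
    using match(2) by (intro continuous_on_cases_le continuous_on_id) auto
  then show "continuous_on {y1..y2} (\<lambda>x. if x \<le> c then f' x else g' x)"
    by (rule continuous_on_subset) simp
  fix x assume x: "y1 < x" "x < y2" "x \<noteq> c"
  show "((\<lambda>x. if x \<le> c then f' x else g' x) has_real_derivative
      (a * (if x \<le> c then f' x else g' x) + (lam - s x) * (if x \<le> c then f x else g x)) / d) (at x)"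
  proof (cases "x < c")
    case True
    have "((\<lambda>x. if x \<le> c then f' x else g' x) has_real_derivative
        (a * f' x + (lam - sl) * f x) / d) (at x)"
      by (rule has_field_derivative_transform_within_open[OF f', where S="{..<c}"]) (use True in auto)
    then show ?thesis using True x on_left by simp
  next
    case False
    then have "c < x" using x(3) by simp
    have "((\<lambda>x. if x \<le> c then f' x else g' x) has_real_derivative
        (a * g' x + (lam - sr) * g x) / d) (at x)"
      by (rule has_field_derivative_transform_within_open[OF g', where S="{c<..}"])
        (use \<open>c < x\<close> in auto)
    then show ?thesis using \<open>c < x\<close> x on_right by simp
  qed
qed

lemma is_eigsol_glued_modes:
  fixes d k n w x1 L xi r :: real
  assumes d: "d \<noteq> 0" and L: "0 \<le> L" and xi: "xi = d * n\<^sup>2 + d * w\<^sup>2"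
  defines "A \<equiv> hyp_mode k n L x1" and "B \<equiv> trig_mode k w x1"
  assumes match: "A * trig_mode' k w x1 = B * hyp_mode' k n L x1"
  shows "is_eigsol d (2 * d * k) (\<lambda>x. r - xi * chi x1 L x) 0 L (r - d * k\<^sup>2 - d * w\<^sup>2)
      (\<lambda>x. if x \<le> x1 then A * trig_mode k w x else B * hyp_mode k n L x)
      (\<lambda>x. if x \<le> x1 then A * trig_mode' k w x else B * hyp_mode' k n L x)"
proof (rule is_eigsol_glued[where sl=r and sr="r - xi", OF L d])
  define lam where "lam = r - d * k\<^sup>2 - d * w\<^sup>2"
  show "((\<lambda>x. A * trig_mode k w x) has_real_derivative A * trig_mode' k w x) (at x)" for x
    by (intro DERIV_cmult has_real_derivative_trig_mode)
  show "((\<lambda>x. A * trig_mode' k w x) has_real_derivative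
      (2 * d * k * (A * trig_mode' k w x) + (lam - r) * (A * trig_mode k w x)) / d) (at x)" for x
    by (rule DERIV_cong[OF DERIV_cmult[OF has_real_derivative_trig_mode']])
      (use d in \<open>simp add: lam_def field_simps\<close>)
  show "((\<lambda>x. B * hyp_mode k n L x) has_real_derivative B * hyp_mode' k n L x) (at x)" for x
    by (intro DERIV_cmult has_real_derivative_hyp_mode)
  show "((\<lambda>x. B * hyp_mode' k n L x) has_real_derivative
      (2 * d * k * (B * hyp_mode' k n L x) + (lam - (r - xi)) * (B * hyp_mode k n L x)) / d) (at x)" for x
    by (rule DERIV_cong[OF DERIV_cmult[OF has_real_derivative_hyp_mode']])
      (use d in \<open>simp add: lam_def xi field_simps\<close>)
  show "A * trig_mode k w x1 = B * hyp_mode k n L x1"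
    unfolding A_def B_def by simp
qed (use match in \<open>auto simp: chi_def\<close>)

lemma lambda1_eq_matched:
  assumes d: "d > 0" and k: "k \<ge> 0" and x1: "0 < x1" "x1 < L"
    and w: "0 < w" "w * x1 < pi / 2 + arctan (k / w)" and n: "k < n" and xi: "xi = d * n\<^sup>2 + d * w\<^sup>2"
    and match: "hyp_mode k n L x1 * trig_mode' k w x1 = trig_mode k w x1 * hyp_mode' k n L x1"
  shows "lambda1 d (2 * d * k) (\<lambda>x. r - xi * chi x1 L x) 0 L = r - d * k\<^sup>2 - d * w\<^sup>2"
proof (rule lambda1_eqI[where p=x1, OF _ d _ is_eigsol_glued_modes[OF _ _ xi match]])
  have hyp_pos: "hyp_mode k n L x > 0" for x using n k by (intro hyp_mode_pos) auto
  have trig_pos: "trig_mode k w x > 0" if "0 \<le> x" "x \<le> x1" for x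
  proof -
    have "w * x \<le> w * x1" using that w(1) by (simp add: mult_left_mono)
    with w(2) have "w * x < pi / 2 + arctan (k / w)" by linarith
    then show ?thesis using trig_mode_pos[OF w(1) that(1)] by simp
  qed
  show "\<forall>x\<in>{0<..<L}. 0 < (if x \<le> x1 then hyp_mode k n L x1 * trig_mode k w x
      else trig_mode k w x1 * hyp_mode k n L x)"
    using x1 hyp_pos trig_pos by auto
  show "isCont (\<lambda>x. r - xi * chi x1 L x) t" if "0 < t" "t < L" "t \<noteq> x1" for t
    using that by (intro continuous_intros isCont_chi) auto
  show "d * (if 0 \<le> x1 then hyp_mode k n L x1 * trig_mode' k w 0
        else trig_mode k w x1 * hyp_mode' k n L 0) -
      2 * d * k * (if 0 \<le> x1 then hyp_mode k n L x1 * trig_mode k w 0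
        else trig_mode k w x1 * hyp_mode k n L 0) = 0"
    using x1 by (simp add: trig_mode_def trig_mode'_def)
qed (use d x1 in auto)

lemma matching_wronskian_eventually_pos:
  fixes p q k L x :: real
  assumes "p > 0" "x < L"
  shows "\<forall>\<^sub>F n in at_top. hyp_mode k n L x * q - p * hyp_mode' k n L x > 0"
proof -
  define h where "h = L - x"
  have "h > 0" using assms(2) by (simp add: h_def)
  then show ?thesis
    using assms(1) unfolding hyp_mode_def hyp_mode'_def h_def[symmetric] by real_asymp
qed

lemma lambda1_between:
  fixes d k x1 L wD w0 xi r :: real
  assumes d: "d > 0" and k: "k \<ge> 0" and x1: "0 < x1" "x1 < L"
    and wD: "wD > 0" "wD * x1 = pi / 2 + arctan (k / wD)" and w0: "0 < w0" "w0 < wD"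
  defines "n \<equiv> \<lambda>w. sqrt (xi / d - w\<^sup>2)"
  defines "M \<equiv> \<lambda>w. hyp_mode k (n w) L x1 * trig_mode' k w x1 -
    trig_mode k w x1 * hyp_mode' k (n w) L x1"
  assumes n_wD: "k < n wD" and M_w0: "M w0 > 0"
  shows "r - d * k\<^sup>2 - d * wD\<^sup>2 < lambda1 d (2 * d * k) (\<lambda>x. r - xi * chi x1 L x) 0 L \<and>
    lambda1 d (2 * d * k) (\<lambda>x. r - xi * chi x1 L x) 0 L < r - d * k\<^sup>2 - d * w0\<^sup>2"
proof -
  have "M wD < 0"
    using trig_mode_first_zero[OF wD] hyp_mode_pos[of k "n wD" L x1] n_wD k
    unfolding M_def by (simp add: mult_pos_neg)
  moreover have "continuous_on {w0..wD} M"
    unfolding M_def n_def hyp_mode_def hyp_mode'_def trig_mode_def trig_mode'_def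
    by (intro continuous_intros)
  ultimately obtain w where "w0 \<le> w" "w \<le> wD" "M w = 0"
    using IVT2'[of M wD 0 w0] M_w0 w0 by auto
  then have w: "w0 < w" "w < wD" using M_w0 \<open>M wD < 0\<close> by (auto simp: order.order_iff_strict)
  then have w_pos: "0 < w" using w0 by simp
  have "n wD \<le> n w" unfolding n_def using w w_pos by (simp add: power_mono)
  then have "k < n w" using n_wD by simp
  then have "xi / d - w\<^sup>2 > 0" using k unfolding n_def by (metis le_less_trans real_sqrt_gt_0_iff)
  then have xi: "xi = d * (n w)\<^sup>2 + d * w\<^sup>2" unfolding n_def using d by (simp add: field_simps)
  have "lambda1 d (2 * d * k) (\<lambda>x. r - xi * chi x1 L x) 0 L = r - d * k\<^sup>2 - d * w\<^sup>2"
    using \<open>M w = 0\<close> unfolding M_def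
    by (intro lambda1_eq_matched[OF d k x1 w_pos _ \<open>k < n w\<close> xi]
        below_first_zero_frequency[OF w_pos w(2) wD(2) k x1(1)]) simp
  moreover have "w0\<^sup>2 < w\<^sup>2" "w\<^sup>2 < wD\<^sup>2" using w w0 by (simp_all add: power_strict_mono)
  ultimately show ?thesis using d by simp
qed

lemma lambda1_eventually_between:
  assumes d: "d > 0" and k: "k \<ge> 0" and x1: "0 < x1" "x1 < L"
    and wD: "wD > 0" "wD * x1 = pi / 2 + arctan (k / wD)" and w0: "0 < w0" "w0 < wD"
  shows "\<forall>\<^sub>F xi in at_top.
    r - d * k\<^sup>2 - d * wD\<^sup>2 < lambda1 d (2 * d * k) (\<lambda>x. r - xi * chi x1 L x) 0 L \<and>
    lambda1 d (2 * d * k) (\<lambda>x. r - xi * chi x1 L x) 0 L < r - d * k\<^sup>2 - d * w0\<^sup>2"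
proof -
  have n_lim: "filterlim (\<lambda>xi. sqrt (xi / d - w\<^sup>2)) at_top at_top" for w
    using d by real_asymp
  have "trig_mode k w0 x1 > 0"
    using trig_mode_pos below_first_zero_frequency[OF w0 wD(2) k x1(1)] w0 x1 by simp
  then have "\<forall>\<^sub>F xi in at_top. hyp_mode k (sqrt (xi / d - w0\<^sup>2)) L x1 * trig_mode' k w0 x1 -
      trig_mode k w0 x1 * hyp_mode' k (sqrt (xi / d - w0\<^sup>2)) L x1 > 0"
    by (rule eventually_compose_filterlim[OF matching_wronskian_eventually_pos n_lim]) (use x1 in simp)
  moreover have "\<forall>\<^sub>F xi in at_top. k < sqrt (xi / d - wD\<^sup>2)"
    by (rule eventually_compose_filterlim[OF eventually_gt_at_top n_lim])
  ultimately show ?thesis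
    by eventually_elim (rule lambda1_between[OF d k x1 wD w0])
qed

lemma tendsto_between_at_left:
  fixes F :: "real \<Rightarrow> real" and f :: "'a \<Rightarrow> real"
  assumes F: "(F \<longlongrightarrow> F c) (at_left c)" and "b < c"
    and between: "\<And>w. b < w \<Longrightarrow> w < c \<Longrightarrow> \<forall>\<^sub>F x in G. F c < f x \<and> f x < F w"
  shows "(f \<longlongrightarrow> F c) G"
proof (rule order_tendstoI)
  fix y assume "y < F c"
  then show "\<forall>\<^sub>F x in G. y < f x"
    using between[of "(b + c) / 2"] \<open>b < c\<close> by (auto elim: eventually_mono)
next
  fix y assume "F c < y"
  with F have "\<forall>\<^sub>F w in at_left c. F w < y" by (rule order_tendstoD(2))
  then have "\<forall>\<^sub>F w in at_left c. F w < y \<and> w \<in> {b<..<c}"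
    using eventually_at_left_real[OF \<open>b < c\<close>] by (rule eventually_conj)
  then obtain w where "F w < y" "b < w" "w < c"
    using eventually_happens'[of "at_left c"] by auto
  then show "\<forall>\<^sub>F x in G. f x < y"
    using between[of w] by (auto elim: eventually_mono)
qed

theorem lemma3p5:
  fixes d a r x1 L :: real
  assumes "d > 0" and "a \<ge> 0" and "r > 0" and "0 < x1" and "x1 < L"
  shows "((\<lambda>\<xi>. lambda1 d a (\<lambda>x. r - \<xi> * chi x1 L x) 0 L) \<longlongrightarrow> lambda1D d a r 0 x1) at_top"
proof -
  define k where "k = a / (2 * d)"
  have a: "a = 2 * d * k" and k: "k \<ge> 0" using assms by (simp_all add: k_def)
  obtain wD where wD: "wD > 0" "wD * x1 = pi / 2 + arctan (k / wD)"
    using first_zero_frequency_exists[OF \<open>0 < x1\<close> k] .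
  define F where "F w = r - d * k\<^sup>2 - d * w\<^sup>2" for w
  have "lambda1D d a r 0 x1 = F wD"
    unfolding a F_def by (rule lambda1D_eq_first_zero[OF \<open>d > 0\<close> \<open>0 < x1\<close> wD])
  moreover have "((\<lambda>\<xi>. lambda1 d a (\<lambda>x. r - \<xi> * chi x1 L x) 0 L) \<longlongrightarrow> F wD) at_top"
  proof (rule tendsto_between_at_left[OF _ wD(1)])
    show "(F \<longlongrightarrow> F wD) (at_left wD)" unfolding F_def by (intro tendsto_intros)
    show "\<forall>\<^sub>F \<xi> in at_top. F wD < lambda1 d a (\<lambda>x. r - \<xi> * chi x1 L x) 0 L \<and>
        lambda1 d a (\<lambda>x. r - \<xi> * chi x1 L x) 0 L < F w0" if "0 < w0" "w0 < wD" for w0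
      using lambda1_eventually_between[OF \<open>d > 0\<close> k \<open>0 < x1\<close> \<open>x1 < L\<close> wD that]
      unfolding a F_def .
  qed
  ultimately show ?thesis by simp
qed

end
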